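(* In $M_2(\mathbb{C})[z]$ define $$\alpha_1=\begin{pmatrix}1&0\\-1&0\end{pmatrix}+\begin{pmatrix}0&0\\1&0\end{pmatrix}z+\begin{pmatrix}1&1\\0&0\end{pmatrix}\frac{z^2}{2},\qquad \alpha_3=\begin{pmatrix}1&1\\-1&-1\end{pmatrix}z+\begin{pmatrix}-1&1\\0&0\end{pmatrix}\frac{z^2}{2},$$ $$\alpha_4=\begin{pmatrix}0&0\\1&0\end{pmatrix}\frac{z^2}{2},\qquad \alpha_5=\begin{pmatrix}0&0\\0&1\end{pmatrix}\frac{z^2}{2},$$ and set $\beta_1=\alpha_1+\alpha_3$, $\beta_3=\alpha_1-\alpha_3$, $\beta_4=2\alpha_4$, $\beta_5=2\alpha_5$. Then the set $$\{\beta_4\beta_1,\beta_3,\beta_1\}\cup\{\beta_5^n: n\ge0\}\cup\{\beta_5^n\beta_4: n\ge0\}\cup\{\beta_5^n\beta_1\beta_4: n\ge0\}\cup\{\beta_5^n\beta_1: n\ge1\}\cup\{\beta_3\beta_5^n: n\ge1\}$$ $$\cup\{\beta_1\beta_5^n: n\ge1\}\cup\{\beta_3\beta_5^n\beta_4: n\ge0\}\cup\{\beta_1\beta_5^n\beta_4: n\ge1\}$$ is linearly independent over $\mathbb{C}$. *)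

theory Defs
  imports "HOL-Analysis.Analysis" "HOL-Computational_Algebra.Polynomial"
begin

text \<open>Elements of M_2(C)[z] are represented as 2x2 matrices with entries in C[z]
  (the canonical ring isomorphism M_2(C)[z] = M_2(C[z])).\<close>

type_synonym pmat = "complex poly ^ 2 ^ 2"

definition cmat :: "complex \<Rightarrow> complex \<Rightarrow> complex \<Rightarrow> complex \<Rightarrow> complex ^ 2 ^ 2" where
  "cmat a b c d = (\<chi> i j. if i = 1 then (if j = 1 then a else b) else (if j = 1 then c else d))"

definition term_z :: "complex ^ 2 ^ 2 \<Rightarrow> nat \<Rightarrow> pmat" where
  "term_z A k = (\<chi> i j. monom (A $ i $ j) k)"

text \<open>Matrix powers w.r.t. matrix multiplication (note: ^ on vec types is entrywise).\<close>
primrec mpow :: "pmat \<Rightarrow> nat \<Rightarrow> pmat" where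
  "mpow A 0 = mat 1"
| "mpow A (Suc n) = A ** mpow A n"

definition msmult :: "complex \<Rightarrow> pmat \<Rightarrow> pmat" where
  "msmult c A = (\<chi> i j. smult c (A $ i $ j))"

definition lin_indep_C :: "pmat set \<Rightarrow> bool" where
  "lin_indep_C S \<longleftrightarrow> (\<forall>T u. finite T \<and> T \<subseteq> S \<and> (\<Sum>v\<in>T. msmult (u v) v) = 0 \<longrightarrow> (\<forall>v\<in>T. u v = 0))"

definition alpha1 :: pmat where
  "alpha1 = term_z (cmat 1 0 (-1) 0) 0 + term_z (cmat 0 0 1 0) 1 + term_z (cmat (1/2) (1/2) 0 0) 2"
definition alpha3 :: pmat where
  "alpha3 = term_z (cmat 1 1 (-1) (-1)) 1 + term_z (cmat (-1/2) (1/2) 0 0) 2"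
definition alpha4 :: pmat where
  "alpha4 = term_z (cmat 0 0 (1/2) 0) 2"
definition alpha5 :: pmat where
  "alpha5 = term_z (cmat 0 0 0 (1/2)) 2"

definition beta1 :: pmat where "beta1 = alpha1 + alpha3"
definition beta3 :: pmat where "beta3 = alpha1 - alpha3"
definition beta4 :: pmat where "beta4 = alpha4 + alpha4"
definition beta5 :: pmat where "beta5 = alpha5 + alpha5"

end

theory Submission imports Defs begin

(* Every member of the family has a pivot,
   an entry and a power of z at which its coefficient is nonzero, such that every other member
   with a nonzero coefficient there belongs to an earlier round of elimination. Comparing pivot
   coefficients in a vanishing linear combination therefore kills its coefficients round by
   round. *)

definition mat2 :: "complex poly \<Rightarrow> complex poly \<Rightarrow> complex poly \<Rightarrow> complex poly \<Rightarrow> pmat" where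
  "mat2 a b c d = (\<chi> i j. if i = 1 then (if j = 1 then a else b) else (if j = 1 then c else d))"

abbreviation zpow :: "nat \<Rightarrow> complex poly" where "zpow k \<equiv> monom 1 k"

lemma mat2_nth [simp]:
  "mat2 a b c d $ 1 $ 1 = a" "mat2 a b c d $ 1 $ 2 = b"
  "mat2 a b c d $ 2 $ 1 = c" "mat2 a b c d $ 2 $ 2 = d"
  by (simp_all add: mat2_def)

lemma mat2_eq_iff: "mat2 a b c d = mat2 a' b' c' d' \<longleftrightarrow> a = a' \<and> b = b' \<and> c = c' \<and> d = d'"
  by (auto simp: mat2_def vec_eq_iff forall_2)

lemma mat2_mult [simp]:
  "mat2 a b c d ** mat2 e f g h = mat2 (a*e + b*g) (a*f + b*h) (c*e + d*g) (c*f + d*h)"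
  by (simp add: mat2_def vec_eq_iff forall_2 matrix_matrix_mult_def sum_2)

lemma mat2_add [simp]: "mat2 a b c d + mat2 e f g h = mat2 (a+e) (b+f) (c+g) (d+h)"
  by (simp add: mat2_def vec_eq_iff forall_2)

lemma mat2_diff [simp]: "mat2 a b c d - mat2 e f g h = mat2 (a-e) (b-f) (c-g) (d-h)"
  by (simp add: mat2_def vec_eq_iff forall_2)

lemma mat1_eq_mat2: "mat 1 = mat2 1 0 0 1"
  by (simp add: mat2_def vec_eq_iff forall_2 mat_def)

lemma term_z_cmat: "term_z (cmat a b c d) k = mat2 (monom a k) (monom b k) (monom c k) (monom d k)"
  by (simp add: mat2_def term_z_def cmat_def vec_eq_iff forall_2)

lemma beta1_eq: "beta1 = mat2 (1 + zpow 1) (zpow 1 + zpow 2) (- 1) (- zpow 1)"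
  unfolding beta1_def alpha1_def alpha3_def term_z_cmat
  by (simp add: mat2_eq_iff poly_eq_iff numeral_mult_conv_smult)

lemma beta3_eq: "beta3 = mat2 (1 - zpow 1 + zpow 2) (- zpow 1) (monom 2 1 - 1) (zpow 1)"
  unfolding beta3_def alpha1_def alpha3_def term_z_cmat
  by (simp add: mat2_eq_iff poly_eq_iff numeral_mult_conv_smult)

lemma beta4_eq: "beta4 = mat2 0 0 (zpow 2) 0"
  unfolding beta4_def alpha4_def term_z_cmat
  by (simp add: mat2_eq_iff poly_eq_iff numeral_mult_conv_smult)

lemma beta5_eq: "beta5 = mat2 0 0 0 (zpow 2)"
  unfolding beta5_def alpha5_def term_z_cmat
  by (simp add: mat2_eq_iff poly_eq_iff numeral_mult_conv_smult)

lemma mpow_beta5: "mpow beta5 n = mat2 (if n = 0 then 1 else 0) 0 0 (zpow (2*n))"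
  by (induction n) (auto simp: mat1_eq_mat2 beta5_eq mult_monom mat2_eq_iff)

definition entry_coeff :: "2 \<times> 2 \<times> nat \<Rightarrow> pmat \<Rightarrow> complex" where
  "entry_coeff p A = (case p of (r, c, k) \<Rightarrow> coeff (A $ r $ c) k)"

lemma entry_coeff_lincomb:
  "entry_coeff p (\<Sum>v\<in>T. msmult (u v) v) = (\<Sum>v\<in>T. u v * entry_coeff p v)"
  by (simp add: entry_coeff_def coeff_sum msmult_def split: prod.split)

lemma lin_indep_C_triangular:
  fixes g :: "'i \<Rightarrow> pmat" and pivot :: "'i \<Rightarrow> 2 \<times> 2 \<times> nat" and rank :: "'i \<Rightarrow> 'r::wellorder"
  assumes pivot_nonzero: "\<And>i. i \<in> I \<Longrightarrow> entry_coeff (pivot i) (g i) \<noteq> 0"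
    and triangular: "\<And>i j. i \<in> I \<Longrightarrow> j \<in> I \<Longrightarrow> entry_coeff (pivot i) (g j) \<noteq> 0 \<Longrightarrow>
      j = i \<or> rank j < rank i"
  shows "lin_indep_C (g ` I)"
  unfolding lin_indep_C_def
proof (intro allI impI)
  fix T u
  assume "finite T \<and> T \<subseteq> g ` I \<and> (\<Sum>v\<in>T. msmult (u v) v) = 0"
  then have fin: "finite T" and sub: "T \<subseteq> g ` I" and zero: "(\<Sum>v\<in>T. msmult (u v) v) = 0"
    by auto
  have "u (g i) = 0" if "i \<in> I" "g i \<in> T" for i
    using that
  proof (induction "rank i" arbitrary: i rule: less_induct)
    case less
    have rest: "(\<Sum>v\<in>T - {g i}. u v * entry_coeff (pivot i) v) = 0"
    proof (rule sum.neutral, rule ballI)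
      fix v assume v: "v \<in> T - {g i}"
      with sub obtain j where j: "j \<in> I" "v = g j" "j \<noteq> i" by auto
      show "u v * entry_coeff (pivot i) v = 0"
      proof (cases "entry_coeff (pivot i) v = 0")
        case False
        with triangular[OF less.prems(1) j(1)] j have "rank j < rank i" by auto
        with less.hyps j v show ?thesis by auto
      qed simp
    qed
    have "0 = (\<Sum>v\<in>T. u v * entry_coeff (pivot i) v)"
      using zero entry_coeff_lincomb[of "pivot i" u T] by (simp add: entry_coeff_def split: prod.split)
    also have "\<dots> = u (g i) * entry_coeff (pivot i) (g i)"
      using rest by (simp add: sum.remove[OF fin less.prems(2)])
    finally show "u (g i) = 0"
      using pivot_nonzero[OF less.prems(1)] by simp
  qed
  with sub show "\<forall>v\<in>T. u v = 0" by auto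
qed

lemma lin_indep_C_subset: "lin_indep_C S \<Longrightarrow> T \<subseteq> S \<Longrightarrow> lin_indep_C T"
  unfolding lin_indep_C_def by blast

datatype word = B4B1 | B3 | B1 | Pow nat | PowB4 nat | PowB1B4 nat | PowB1 nat
  | B3Pow nat | B1Pow nat | B3PowB4 nat | B1PowB4 nat

fun word_mat :: "word \<Rightarrow> pmat" where
  "word_mat B4B1 = beta4 ** beta1"
| "word_mat B3 = beta3"
| "word_mat B1 = beta1"
| "word_mat (Pow n) = mpow beta5 n"
| "word_mat (PowB4 n) = mpow beta5 n ** beta4"
| "word_mat (PowB1B4 n) = mpow beta5 n ** beta1 ** beta4"
| "word_mat (PowB1 n) = mpow beta5 n ** beta1"
| "word_mat (B3Pow n) = beta3 ** mpow beta5 n"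
| "word_mat (B1Pow n) = beta1 ** mpow beta5 n"
| "word_mat (B3PowB4 n) = beta3 ** mpow beta5 n ** beta4"
| "word_mat (B1PowB4 n) = beta1 ** mpow beta5 n ** beta4"

fun admissible :: "word \<Rightarrow> bool" where
  "admissible (PowB1 n) \<longleftrightarrow> n \<ge> 1"
| "admissible (B3Pow n) \<longleftrightarrow> n \<ge> 1"
| "admissible (B1Pow n) \<longleftrightarrow> n \<ge> 1"
| "admissible (B1PowB4 n) \<longleftrightarrow> n \<ge> 1"
| "admissible _ \<longleftrightarrow> True"

lemma word_mat_explicit:
  "word_mat B4B1 = mat2 0 0 (zpow 2 + zpow 3) (zpow 3 + zpow 4)"
  "word_mat B3 = mat2 (1 - zpow 1 + zpow 2) (- zpow 1) (monom 2 1 - 1) (zpow 1)"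
  "word_mat B1 = mat2 (1 + zpow 1) (zpow 1 + zpow 2) (- 1) (- zpow 1)"
  "word_mat (Pow n) = mat2 (if n = 0 then 1 else 0) 0 0 (zpow (2*n))"
  "word_mat (PowB4 n) = mat2 0 0 (zpow (2*n + 2)) 0"
  "word_mat (PowB1B4 n) = mat2 (if n = 0 then zpow 3 + zpow 4 else 0) 0 (- zpow (2*n + 3)) 0"
  "n \<ge> 1 \<Longrightarrow> word_mat (PowB1 n) = mat2 0 0 (- zpow (2*n)) (- zpow (2*n + 1))"
  "n \<ge> 1 \<Longrightarrow> word_mat (B3Pow n) = mat2 0 (- zpow (2*n + 1)) 0 (zpow (2*n + 1))"
  "n \<ge> 1 \<Longrightarrow> word_mat (B1Pow n) = mat2 0 (zpow (2*n + 1) + zpow (2*n + 2)) 0 (- zpow (2*n + 1))"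
  "word_mat (B3PowB4 n) = mat2 (- zpow (2*n + 3)) 0 (zpow (2*n + 3)) 0"
  "n \<ge> 1 \<Longrightarrow> word_mat (B1PowB4 n) = mat2 (zpow (2*n + 3) + zpow (2*n + 4)) 0 (- zpow (2*n + 3)) 0"
  by (simp_all add: beta1_eq beta3_eq beta4_eq mpow_beta5 mat2_eq_iff poly_eq_iff algebra_simps
      mult_monom)

fun pivot :: "word \<Rightarrow> 2 \<times> 2 \<times> nat" where
  "pivot B4B1 = (2, 1, 3)"
| "pivot B3 = (1, 1, 2)"
| "pivot B1 = (1, 2, 2)"
| "pivot (Pow n) = (2, 2, 2*n)"
| "pivot (PowB4 n) = (2, 1, 2*n + 2)"
| "pivot (PowB1B4 n) = (if n = 0 then (1, 1, 4) else (2, 1, 2*n + 3))"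
| "pivot (PowB1 n) = (2, 2, 2*n + 1)"
| "pivot (B3Pow n) = (1, 2, 2*n + 1)"
| "pivot (B1Pow n) = (1, 2, 2*n + 2)"
| "pivot (B3PowB4 n) = (1, 1, 2*n + 3)"
| "pivot (B1PowB4 n) = (1, 1, 2*n + 4)"

(* Round 0 consists of the words whose pivot occurs in no other word, round k + 1 of those
   whose pivot occurs otherwise only in rounds up to k. *)
fun elimination_round :: "word \<Rightarrow> nat" where
  "elimination_round B4B1 = 2"
| "elimination_round B3 = 0"
| "elimination_round B1 = 0"
| "elimination_round (Pow n) = 3"
| "elimination_round (PowB4 n) = 4"
| "elimination_round (PowB1B4 n) = (if n = 0 then 0 else 2)"
| "elimination_round (PowB1 n) = 3"
| "elimination_round (B3Pow n) = 1"
| "elimination_round (B1Pow n) = 0"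
| "elimination_round (B3PowB4 n) = 1"
| "elimination_round (B1PowB4 n) = 0"

lemma pivot_coeff_nonzero: "admissible w \<Longrightarrow> entry_coeff (pivot w) (word_mat w) \<noteq> 0"
  by (cases w) (simp_all del: word_mat.simps add: word_mat_explicit entry_coeff_def)

lemma pivot_coeff_triangular:
  "admissible v \<Longrightarrow> admissible w \<Longrightarrow> entry_coeff (pivot v) (word_mat w) \<noteq> 0 \<Longrightarrow>
    w = v \<or> elimination_round w < elimination_round v"
  by (cases v; cases w)
    (auto simp del: word_mat.simps simp add: word_mat_explicit entry_coeff_def split: if_splits,
      presburger+)

lemma lin_indep_C_word_mats: "lin_indep_C (word_mat ` {w. admissible w})"
  using pivot_coeff_nonzero pivot_coeff_triangular
  by (intro lin_indep_C_triangular[where rank = elimination_round]) auto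

theorem proposition4:
  shows "lin_indep_C
    ({beta4 ** beta1, beta3, beta1}
     \<union> {mpow beta5 n | n. n \<ge> 0}
     \<union> {mpow beta5 n ** beta4 | n. n \<ge> 0}
     \<union> {mpow beta5 n ** beta1 ** beta4 | n. n \<ge> 0}
     \<union> {mpow beta5 n ** beta1 | n. n \<ge> 1}
     \<union> {beta3 ** mpow beta5 n | n. n \<ge> 1}
     \<union> {beta1 ** mpow beta5 n | n. n \<ge> 1}
     \<union> {beta3 ** mpow beta5 n ** beta4 | n. n \<ge> 0}
     \<union> {beta1 ** mpow beta5 n ** beta4 | n. n \<ge> 1})"
  by (rule lin_indep_C_subset[OF lin_indep_C_word_mats])
    (auto simp: image_iff intro!: exI conjI[rotated] word_mat.simps[symmetric])

end
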